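(* Let $k_1=2$ and $k_{i+1}=\big(\prod_{j\le i}k_j\big)+1$ (the Sylvester sequence), let $c$ be a positive integer and $\epsilon:=1/\prod_{\ell=1}^c k_\ell$. Define $\vec s\in[0,1]^{c+1}$ by $s_i=\frac{1}{k_i}(1-\frac{\epsilon}{2})$ for $i\in[c]$ and $s_{c+1}=\epsilon(\frac32-\frac{\epsilon}{2})$. Let $\vec\chi\in\mathbb{N}^{c+1}$ satisfy $\vec\chi\cdot\vec s\le 1$. Then: (a) if $\chi_{c+1}=1$ and $\vec\chi\ne\vec 1$, then $\vec\chi\cdot\vec s\le 1-\epsilon/2$; (b) if $\chi_{c+1}=0$, then $\vec\chi\cdot\vec s\le 1-\epsilon/2$; (c) if $\chi_{c+1}=0$ and $\vec\chi\ne k_i\vec e_i$ for every $i\in[c]$, then $\vec\chi\cdot\vec s\le 1-\epsilon$.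
   Context: $\vec 1$ denotes the all-ones vector in $\mathbb{R}^{c+1}$ and $\vec e_i$ the $i$-th standard basis vector. $\vec\chi$ is interpreted as the characteristic vector of a feasibly packed unit bin ($\chi_i$ = number of items of size $s_i$ in it). *)

theory Defs
  imports "HOL-Analysis.Analysis"
begin

text \<open>Sylvester sequence, 1-indexed: k 1 = 2, k (i+1) = (prod_{j=1..i} k j) + 1.
  The value at index 0 is irrelevant (set to 1 by the same formula, empty product).\<close>
function sylvester :: "nat \<Rightarrow> nat" where
  "sylvester n = (if n = 1 then 2 else (\<Prod>j\<in>{1..<n}. sylvester j) + 1)"
  by auto
termination
  by (relation "Wellfounded.measure id") auto

text \<open>Vectors in R^{c+1} are represented as functions on indices 1..c+1.\<close>
definition sizes :: "nat \<Rightarrow> nat \<Rightarrow> real" where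
  "sizes c i = (let eps = 1 / (\<Prod>l=1..c. real (sylvester l)) in
     if i = c + 1 then eps * (3/2 - eps/2) else (1 / real (sylvester i)) * (1 - eps/2))"

definition dotp :: "nat \<Rightarrow> (nat \<Rightarrow> nat) \<Rightarrow> real" where
  "dotp c x = (\<Sum>i=1..c+1. real (x i) * sizes c i)"

end

(*
  Write P = k_1 \<cdots> k_c. Every sum \<Sum>i\<le>c. \<chi>_i / k_i equals m / P for a natural number m,
  so a bin has load (m (2P - 1) + \<chi>_{c+1} (3P - 1)) / (2P\<^sup>2), and fitting into the unit bin
  forces m + \<chi>_{c+1} \<le> P. All three bounds then reduce to excluding two extreme
  numerators: m = P - 1 forces \<chi>_i = 1 for all i \<le> c, and m = P forces \<chi> = k_i e_i.
  Both follow by induction on c: since P_{c+1} = P_c (P_c + 1), the numerators satisfy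
  m_{c+1} = m_c (P_c + 1) + \<chi>_{c+1} P_c, and reducing modulo P_c + 1 determines \<chi>_{c+1}.
*)
theory Submission
  imports Defs
begin

declare sylvester.simps [simp del]

definition sylvester_prod :: "nat \<Rightarrow> nat" where
  "sylvester_prod c = (\<Prod>l=1..c. sylvester l)"

lemma sylvester_Suc: "sylvester (Suc c) = sylvester_prod c + 1"
proof (cases "c = 0")
  case True
  then show ?thesis by (simp add: sylvester_prod_def sylvester.simps)
next
  case False
  have "{1..<Suc c} = {1..c}" by auto
  with False show ?thesis
    by (subst sylvester.simps) (simp add: sylvester_prod_def)
qed

lemma sylvester_pos: "sylvester n > 0"
  by (subst sylvester.simps) auto

lemma sylvester_prod_pos: "sylvester_prod c > 0"
  unfolding sylvester_prod_def using sylvester_pos by (simp add: prod_pos)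

lemma sylvester_prod_Suc: "sylvester_prod (Suc c) = sylvester_prod c * (sylvester_prod c + 1)"
  unfolding sylvester_prod_def by (simp add: sylvester_Suc[unfolded sylvester_prod_def])

lemma sylvester_dvd_prod: "i \<in> {1..c} \<Longrightarrow> sylvester i dvd sylvester_prod c"
  unfolding sylvester_prod_def by (rule dvd_prodI) auto

lemma sylvester_prod_ge_two:
  assumes "c \<ge> 1"
  shows "sylvester_prod c \<ge> 2"
proof -
  have "sylvester 1 = 2" by (simp add: sylvester.simps)
  moreover have "sylvester 1 dvd sylvester_prod c"
    using assms by (intro sylvester_dvd_prod) simp
  ultimately show ?thesis
    using sylvester_prod_pos dvd_imp_le by metis
qed

definition sylvester_numerator :: "nat \<Rightarrow> (nat \<Rightarrow> nat) \<Rightarrow> nat" where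
  "sylvester_numerator c x = (\<Sum>i=1..c. x i * (sylvester_prod c div sylvester i))"

lemma sum_div_sylvester_eq_numerator:
  "(\<Sum>i=1..c. real (x i) / real (sylvester i)) = real (sylvester_numerator c x) / real (sylvester_prod c)"
proof -
  have "real (sylvester_numerator c x)
      = (\<Sum>i=1..c. real (x i) * (real (sylvester_prod c) / real (sylvester i)))"
    unfolding sylvester_numerator_def of_nat_sum
    by (intro sum.cong refl) (simp add: real_of_nat_div sylvester_dvd_prod)
  also have "\<dots> = (\<Sum>i=1..c. real (x i) / real (sylvester i)) * real (sylvester_prod c)"
    unfolding sum_distrib_right by (intro sum.cong) auto
  finally show ?thesis
    using sylvester_prod_pos[of c] by simp
qed

lemma sylvester_numerator_Suc:
  "sylvester_numerator (Suc c) x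
     = sylvester_numerator c x * (sylvester_prod c + 1) + x (Suc c) * sylvester_prod c"
proof -
  have "x i * (sylvester_prod (Suc c) div sylvester i)
      = x i * (sylvester_prod c div sylvester i) * (sylvester_prod c + 1)"
    if "i \<in> {1..c}" for i
  proof -
    have "sylvester_prod (Suc c) div sylvester i = sylvester_prod c div sylvester i * (sylvester_prod c + 1)"
      using sylvester_dvd_prod[OF that] unfolding sylvester_prod_Suc by (simp add: div_mult_swap mult.commute)
    then show ?thesis by (simp only: mult.assoc)
  qed
  then have "(\<Sum>i=1..c. x i * (sylvester_prod (Suc c) div sylvester i))
      = sylvester_numerator c x * (sylvester_prod c + 1)"
    unfolding sylvester_numerator_def sum_distrib_right by (rule sum.cong[OF refl])
  moreover have "sylvester_prod (Suc c) div sylvester (Suc c) = sylvester_prod c"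
    unfolding sylvester_prod_Suc sylvester_Suc by (rule nonzero_mult_div_cancel_right) simp
  ultimately show ?thesis
    unfolding sylvester_numerator_def[of "Suc c"] by simp
qed

lemma sylvester_step_exact:
  fixes S y P :: nat
  assumes eq: "S * (P + 1) + y * P = P * (P + 1)" and "P > 0"
  shows "(y = 0 \<and> S = P) \<or> (y = P + 1 \<and> S = 0)"
proof -
  have "(S + y) * (P + 1) = P * (P + 1) + y"
    using eq by (simp add: algebra_simps)
  then have "(P + 1) dvd y"
    by (metis dvd_add_right_iff dvd_triv_right)
  moreover have "y * P \<le> (P + 1) * P"
    using eq by (simp add: algebra_simps)
  then have "y \<le> P + 1"
    using \<open>P > 0\<close> mult_le_cancel2 by blast
  ultimately have "y = 0 \<or> y = P + 1"
    using dvd_imp_le le_antisym by blast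
  then show ?thesis
  proof
    assume "y = 0"
    then have "S * (P + 1) = P * (P + 1)" using eq by simp
    then show ?thesis using \<open>y = 0\<close> mult_right_cancel[of "P + 1" S P] by simp
  qed (use eq in \<open>simp add: algebra_simps\<close>)
qed

lemma sylvester_step_minus_one:
  fixes S y P :: nat
  assumes eq: "S * (P + 1) + y * P + 1 = P * (P + 1)"
  shows "y = 1 \<and> S + 1 = P"
proof -
  have "P \<noteq> 0"
    using eq by (cases P) auto
  have "1 + (S + y) * (P + 1) = y + P * (P + 1)"
    using eq by (simp add: algebra_simps)
  then have "(1 + (S + y) * (P + 1)) mod (P + 1) = (y + P * (P + 1)) mod (P + 1)"
    by (rule arg_cong)
  then have "1 mod (P + 1) = y mod (P + 1)"
    by (simp only: mod_mult_self1)
  moreover have "y * P < (P + 1) * P"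
    using eq by (simp add: algebra_simps)
  then have "y < P + 1"
    using mult_less_cancel2 by blast
  ultimately have "y = 1"
    using \<open>P \<noteq> 0\<close> by simp
  moreover from this have "(S + 1) * (P + 1) = P * (P + 1)"
    using eq by (simp add: algebra_simps)
  ultimately show ?thesis
    using mult_right_cancel[of "P + 1" "S + 1" P] by simp
qed

lemma sylvester_numerator_eq_prod_minus_one:
  "sylvester_numerator c x + 1 = sylvester_prod c \<Longrightarrow> \<forall>i\<in>{1..c}. x i = 1"
proof (induction c)
  case 0
  then show ?case by simp
next
  case (Suc c)
  then have "x (Suc c) = 1 \<and> sylvester_numerator c x + 1 = sylvester_prod c"
    by (intro sylvester_step_minus_one) (simp add: sylvester_numerator_Suc sylvester_prod_Suc)
  with Suc.IH show ?case
    by (auto simp: le_Suc_eq)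
qed

lemma sylvester_numerator_eq_prod:
  "sylvester_numerator c x = sylvester_prod c
     \<Longrightarrow> \<exists>i\<in>{1..c}. \<forall>j\<in>{1..c}. x j = (if j = i then sylvester i else 0)"
proof (induction c)
  case 0
  then show ?case by (simp add: sylvester_numerator_def sylvester_prod_def)
next
  case (Suc c)
  have "(x (Suc c) = 0 \<and> sylvester_numerator c x = sylvester_prod c)
      \<or> (x (Suc c) = sylvester_prod c + 1 \<and> sylvester_numerator c x = 0)"
    using Suc.prems sylvester_prod_pos
    by (intro sylvester_step_exact) (simp_all add: sylvester_numerator_Suc sylvester_prod_Suc)
  then show ?case
  proof
    assume "x (Suc c) = 0 \<and> sylvester_numerator c x = sylvester_prod c"
    with Suc.IH show ?case
      by (fastforce simp: le_Suc_eq)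
  next
    assume last: "x (Suc c) = sylvester_prod c + 1 \<and> sylvester_numerator c x = 0"
    have "x j = 0" if "j \<in> {1..c}" for j
    proof -
      have "sylvester_prod c div sylvester j \<noteq> 0"
        using sylvester_dvd_prod[OF that] sylvester_prod_pos[of c] sylvester_pos[of j]
        by (simp add: dvd_div_eq_0_iff)
      moreover have "x j * (sylvester_prod c div sylvester j) = 0"
        using last that by (simp add: sylvester_numerator_def)
      ultimately show ?thesis by simp
    qed
    with last show ?case
      by (intro bexI[of _ "Suc c"]) (auto simp: le_Suc_eq sylvester_Suc)
  qed
qed

lemma dotp_eq_numerator:
  fixes c :: nat and x :: "nat \<Rightarrow> nat"
  defines "P \<equiv> real (sylvester_prod c)"
  shows "dotp c x = (real (sylvester_numerator c x) * (2 * P - 1) + real (x (c + 1)) * (3 * P - 1)) / (2 * P\<^sup>2)"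
proof -
  have P: "(\<Prod>l=1..c. real (sylvester l)) = P"
    unfolding P_def sylvester_prod_def by simp
  have "sizes c i = 1 / real (sylvester i) * (1 - 1 / (2 * P))" if "i \<in> {1..c}" for i
    using that unfolding sizes_def Let_def P by simp
  then have "(\<Sum>i=1..c. real (x i) * sizes c i) = (\<Sum>i=1..c. real (x i) / real (sylvester i)) * (1 - 1 / (2 * P))"
    unfolding sum_distrib_right by (intro sum.cong) auto
  moreover have "sizes c (c + 1) = 1 / P * (3 / 2 - 1 / (2 * P))"
    unfolding sizes_def Let_def P by simp
  ultimately have dotp: "dotp c x = real (sylvester_numerator c x) / P * (1 - 1 / (2 * P))
      + real (x (c + 1)) * (1 / P * (3 / 2 - 1 / (2 * P)))"
    unfolding dotp_def sum_div_sylvester_eq_numerator P_def by simp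
  have "P > 0"
    unfolding P_def using sylvester_prod_pos by simp
  then show ?thesis
    unfolding dotp by (simp add: field_simps power2_eq_square)
qed

lemma dotp_le_one_minus_iff:
  fixes c :: nat and x :: "nat \<Rightarrow> nat" and t :: real
  defines "P \<equiv> real (sylvester_prod c)" and "m \<equiv> real (sylvester_numerator c x)"
    and "X \<equiv> real (x (c + 1))"
  shows "dotp c x \<le> 1 - t / (2 * P) \<longleftrightarrow> m * (2 * P - 1) + X * (3 * P - 1) + t * P \<le> 2 * P\<^sup>2"
proof -
  have "P > 0"
    unfolding P_def using sylvester_prod_pos by simp
  then have "1 - t / (2 * P) = (2 * P\<^sup>2 - t * P) / (2 * P\<^sup>2)"
    by (simp add: field_simps power2_eq_square)
  with \<open>P > 0\<close> show ?thesis
    unfolding dotp_eq_numerator P_def[symmetric] m_def[symmetric] X_def[symmetric]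
    by (simp add: divide_le_cancel le_diff_eq)
qed

lemma sylvester_numerator_add_last_le:
  assumes "c \<ge> 1" and "dotp c x \<le> 1"
  shows "sylvester_numerator c x + x (c + 1) \<le> sylvester_prod c"
proof -
  define P m X where "P = real (sylvester_prod c)" and "m = real (sylvester_numerator c x)"
    and "X = real (x (c + 1))"
  have P: "P \<ge> 2"
    unfolding P_def using sylvester_prod_ge_two[OF assms(1)] by simp
  have "X * (2 * P - 1) \<le> X * (3 * P - 1)"
    using P unfolding X_def by (intro mult_left_mono) auto
  then have "(m + X) * (2 * P - 1) \<le> m * (2 * P - 1) + X * (3 * P - 1)"
    by (simp add: distrib_right)
  also have "\<dots> \<le> 2 * P\<^sup>2"
    using dotp_le_one_minus_iff[of c x 0] assms(2) unfolding P_def m_def X_def by simp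
  also have "\<dots> < (P + 1) * (2 * P - 1)"
    using P by (simp add: algebra_simps power2_eq_square)
  finally have "m + X < P + 1"
    using P by (simp add: mult_less_cancel_right)
  then show ?thesis
    unfolding P_def m_def X_def by linarith
qed

lemma dotp_le_one_minus_half_eps:
  assumes "sylvester_numerator c x + 2 * x (c + 1) \<le> sylvester_prod c"
  shows "dotp c x \<le> 1 - 1 / (2 * real (sylvester_prod c))"
proof -
  define P m X where "P = real (sylvester_prod c)" and "m = real (sylvester_numerator c x)"
    and "X = real (x (c + 1))"
  have "P \<ge> 1"
    unfolding P_def using sylvester_prod_pos[of c] by simp
  have "m \<le> P - 2 * X"
    using assms unfolding P_def m_def X_def by linarith
  then have "m * (2 * P - 1) \<le> (P - 2 * X) * (2 * P - 1)"
    using \<open>P \<ge> 1\<close> by (intro mult_right_mono) auto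
  moreover have "X \<le> X * P"
    using mult_left_mono[OF \<open>P \<ge> 1\<close>, of X] unfolding X_def by simp
  ultimately have "m * (2 * P - 1) + X * (3 * P - 1) + 1 * P \<le> 2 * P\<^sup>2"
    by (simp add: algebra_simps power2_eq_square)
  then show ?thesis
    using dotp_le_one_minus_iff[of c x 1] unfolding P_def m_def X_def by simp
qed

lemma dotp_le_one_minus_eps:
  assumes "sylvester_numerator c x + 2 * x (c + 1) < sylvester_prod c"
  shows "dotp c x \<le> 1 - 1 / real (sylvester_prod c)"
proof -
  define P m X where "P = real (sylvester_prod c)" and "m = real (sylvester_numerator c x)"
    and "X = real (x (c + 1))"
  have "P \<ge> 1"
    unfolding P_def using sylvester_prod_pos[of c] by simp
  have "m \<le> P - 2 * X - 1"
    using assms unfolding P_def m_def X_def by linarith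
  then have "m * (2 * P - 1) \<le> (P - 2 * X - 1) * (2 * P - 1)"
    using \<open>P \<ge> 1\<close> by (intro mult_right_mono) auto
  moreover have "X \<le> X * P"
    using mult_left_mono[OF \<open>P \<ge> 1\<close>, of X] unfolding X_def by simp
  ultimately have "m * (2 * P - 1) + X * (3 * P - 1) + 2 * P \<le> 2 * P\<^sup>2"
    using \<open>P \<ge> 1\<close> by (simp add: algebra_simps power2_eq_square)
  then show ?thesis
    using dotp_le_one_minus_iff[of c x 2] unfolding P_def m_def X_def by simp
qed

theorem lemmaD2:
  fixes c :: nat and x :: "nat \<Rightarrow> nat"
  defines "\<epsilon> \<equiv> 1 / (\<Prod>l=1..c. real (sylvester l))"
  assumes "c \<ge> 1"
    and "dotp c x \<le> 1"
  shows "(x (c+1) = 1 \<and> \<not> (\<forall>i\<in>{1..c+1}. x i = 1) \<longrightarrow> dotp c x \<le> 1 - \<epsilon>/2)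
    \<and> (x (c+1) = 0 \<longrightarrow> dotp c x \<le> 1 - \<epsilon>/2)
    \<and> (x (c+1) = 0 \<and> (\<forall>i\<in>{1..c}. \<not> (\<forall>j\<in>{1..c+1}. x j = (if j = i then sylvester i else 0)))
           \<longrightarrow> dotp c x \<le> 1 - \<epsilon>)"
proof -
  define P m where "P = sylvester_prod c" and "m = sylvester_numerator c x"
  have half_eps: "1 - \<epsilon> / 2 = 1 - 1 / (2 * real P)" and eps: "\<epsilon> = 1 / real P"
    unfolding \<epsilon>_def P_def sylvester_prod_def by simp_all
  have load: "m + x (c + 1) \<le> P"
    unfolding m_def P_def using sylvester_numerator_add_last_le assms(2,3) .
  have "dotp c x \<le> 1 - \<epsilon> / 2" if "x (c + 1) = 1" and "\<not> (\<forall>i\<in>{1..c+1}. x i = 1)"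
  proof -
    have "m + 1 \<noteq> P"
      using sylvester_numerator_eq_prod_minus_one[of c x] that
      unfolding m_def P_def by (auto simp: le_Suc_eq)
    with load that show ?thesis
      unfolding half_eps m_def P_def by (intro dotp_le_one_minus_half_eps) simp
  qed
  moreover have "dotp c x \<le> 1 - \<epsilon> / 2" if "x (c + 1) = 0"
    using load that unfolding half_eps m_def P_def by (intro dotp_le_one_minus_half_eps) simp
  moreover have "dotp c x \<le> 1 - \<epsilon>" if "x (c + 1) = 0"
    and "\<forall>i\<in>{1..c}. \<not> (\<forall>j\<in>{1..c+1}. x j = (if j = i then sylvester i else 0))"
  proof -
    have "m \<noteq> P"
      using sylvester_numerator_eq_prod[of c x] that
      unfolding m_def P_def by (fastforce simp: le_Suc_eq)
    with load that show ?thesis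
      unfolding eps m_def P_def by (intro dotp_le_one_minus_eps) simp
  qed
  ultimately show ?thesis
    by blast
qed

end
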